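(* It holds that $$ \sup_{\mathbbm{u} \in U\setminus U^\delta} \frac{ \|\mathbbm{u}-\mathbbm{u}^\delta\|_U }{ \inf_{\tilde{\mathbbm{u}}^\delta \in U^\delta} \|\mathbbm{u}-\tilde{\mathbbm{u}}^\delta\|_U }= \frac{1}{\gamma^\delta_\kappa}. $$
   Context: Let $\Omega\subset\mathbb R^d$ be a bounded Lipschitz domain with $\partial\Omega=\Gamma_D\,\dot\cup\,\Gamma_N\,\dot\cup\,\Gamma_R$, $|\Gamma_R|>0$, and $\kappa>0$. Let $U:=L_2(\Omega)\times L_2(\Omega)^d$ (complex Hilbert space) and $V_{\mp}:=\{(\eta,\vec{v})\in H^1_{0,\Gamma_D}(\Omega)\times H(\mathrm{div};\Omega)\colon \int_{\partial\Omega}\vec{v}\cdot\vec{n}\,\overline{\psi}\,ds\mp i\int_{\Gamma_R}\eta\overline{\psi}\,ds=0\ \ (\psi\in H^1_{0,\Gamma_D}(\Omega))\}$. Let $B_\kappa'(\eta,\vec{v}):=(-\tfrac1\kappa\mathrm{div}\,\vec{v}-\eta,\ \tfrac1\kappa\nabla\eta-\vec{v})$, which is a boundedly invertible map $V_\mp\to U$, and let $B_\kappa\colon U\to V_\mp'$ be given by $(B_\kappa\mathbbm{w})(\mathbbm{v}):=\langle\mathbbm{w},B_\kappa'\mathbbm{v}\rangle_U$ (ultra-weak first order formulation of the Helmholtz equation, a boundedly invertible map). Equip $V_\mp$ with the optimal test norm $\|\mathbbm{v}\|_{V_{\mp},\kappa}:=\|B_\kappa'\mathbbm{v}\|_U$.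 For $q\in V_\mp'$ let $\mathbbm{u}\in U$ solve $B_\kappa\mathbbm{u}=q$. Let $\{0\}\subsetneq U^\delta\subset U$ and $V_\mp^\delta\subset V_\mp$ be closed subspaces with $\gamma^\delta_\kappa:=\inf_{0\neq\tilde{\mathbbm{u}}^\delta\in U^\delta}\sup_{0\neq\tilde{\mathbbm{v}}^\delta\in V_\mp^\delta}\frac{|(B_\kappa\tilde{\mathbbm{u}}^\delta)(\tilde{\mathbbm{v}}^\delta)|}{\|\tilde{\mathbbm{u}}^\delta\|_U\|\tilde{\mathbbm{v}}^\delta\|_{V_\mp,\kappa}}>0.$ Let $\mathbbm{u}^\delta$ be the second component of the unique $(\mathbbm{v}^\delta,\mathbbm{u}^\delta)\in V_\mp^\delta\times U^\delta$ solving $\langle B_\kappa'\mathbbm{v}^\delta,B_\kappa'\tilde{\mathbbm{v}}^\delta\rangle_U+\langle\mathbbm{u}^\delta,B_\kappa'\tilde{\mathbbm{v}}^\delta\rangle_U=q(\tilde{\mathbbm{v}}^\delta)$ for all $\tilde{\mathbbm{v}}^\delta\in V_\mp^\delta$, and $\langle B_\kappa'\mathbbm{v}^\delta,\tilde{\mathbbm{u}}^\delta\rangle_U=0$ for all $\tilde{\mathbbm{u}}^\delta\in U^\delta$ (the practical ultra-weak FOSLS / minimal residual solution). *)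

theory Defs
  imports "HOL-Analysis.Analysis"
begin

text \<open>Complex Hilbert spaces are modelled as real Hilbert spaces equipped with a
  complex structure J (multiplication by the imaginary unit), since the
  distribution has no type class of complex inner product spaces.\<close>

definition cplx_structure :: "('a::real_inner \<Rightarrow> 'a) \<Rightarrow> bool" where
  "cplx_structure J \<longleftrightarrow> linear J \<and> (\<forall>x. J (J x) = - x) \<and> (\<forall>x y. inner (J x) (J y) = inner x y)"

text \<open>The complex inner product induced by the real one and J:
  linear in the first, conjugate-linear in the second argument, with
  cinner J x x = (norm x)^2.\<close>
definition cinner :: "('a::real_inner \<Rightarrow> 'a) \<Rightarrow> 'a \<Rightarrow> 'a \<Rightarrow> complex" where
  "cinner J x y = Complex (inner x y) (inner x (J y))"

definition csubspace :: "('a::real_vector \<Rightarrow> 'a) \<Rightarrow> 'a set \<Rightarrow> bool" where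
  "csubspace J S \<longleftrightarrow> subspace S \<and> J ` S \<subseteq> S"

text \<open>Discrete inf-sup constant gamma^delta_kappa, with the test space normed by the
  optimal test norm norm (B' v); (B w)(v) = <w, B' v>_U.  A supremum over an empty
  set of nonnegative numbers is taken to be 0.\<close>
definition infsup_const ::
  "('u::real_inner \<Rightarrow> 'u) \<Rightarrow> ('v::real_vector \<Rightarrow> 'u) \<Rightarrow> 'u set \<Rightarrow> 'v set \<Rightarrow> real" where
  "infsup_const J B' Ud Vd =
     (INF w \<in> Ud - {0}. Sup (insert 0
        ((\<lambda>v. cmod (cinner J w (B' v)) / (norm w * norm (B' v))) ` (Vd - {0}))))"

end

theory Submission
  imports Defs
begin

text \<open>Let P be the orthogonal projection onto W = B'(V^\<delta>). The first equation of the
  saddle point system says B' v^\<delta> = P (u - u^\<delta>), the second that P (u - u^\<delta>) is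
  orthogonal to U^\<delta>; so u^\<delta> minimises norm (P (u - q)) over q \<in> U^\<delta>. Since W is
  a complex subspace, the supremum over W in the inf-sup constant equals norm (P a) / norm a,
  so \<gamma> = inf norm (P a) / norm a over U^\<delta>.

  Upper bound: for t \<in> U^\<delta> put a = u^\<delta> - t and b = u - u^\<delta>. Then
  inner a b = inner (a - P a) (b - P b), and norm (a - P a) \<le> sqrt (1 - \<gamma>^2) norm a, which
  forces norm (u - t) = norm (a + b) \<ge> \<gamma> norm b. Lower bound: a unit vector a \<in> U^\<delta>
  with norm (P a) close to \<gamma> yields an explicit u whose ratio is 1 / norm (P a).\<close>

section \<open>Orthogonal projections in Hilbert spaces\<close>

lemma minimising_sequence_convex_Cauchy:
  fixes x :: "'a::real_inner"
  assumes "convex S" and Y_in: "\<And>n. Y n \<in> S"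
    and Y_close: "\<And>n. (dist x (Y n))\<^sup>2 < (infdist x S)\<^sup>2 + 1 / Suc n"
  shows "Cauchy Y"
proof -
  have Y_diff: "(norm (Y m - Y n))\<^sup>2 < 2 / Suc m + 2 / Suc n" for m n
  proof -
    define c where "c = (1/2) *\<^sub>R Y m + (1/2) *\<^sub>R Y n"
    have "c \<in> S" unfolding c_def by (rule convexD[OF \<open>convex S\<close> Y_in Y_in]) auto
    then have "(infdist x S)\<^sup>2 \<le> (norm (x - c))\<^sup>2"
      using infdist_le[of c S x] infdist_nonneg[of x S] by (simp add: dist_norm power_mono)
    moreover have "(norm (Y m - Y n))\<^sup>2
        = 2 * (dist x (Y m))\<^sup>2 + 2 * (dist x (Y n))\<^sup>2 - 4 * (norm (x - c))\<^sup>2"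
      unfolding c_def dist_norm power2_norm_eq_inner
      by (simp add: inner_commute algebra_simps)
    ultimately show ?thesis using Y_close[of m] Y_close[of n] by linarith
  qed
  show "Cauchy Y"
  proof (rule CauchyI)
    fix e :: real assume "0 < e"
    then obtain N where N: "1 / real (Suc N) < e\<^sup>2 / 4"
      by (metis nat_approx_posE zero_less_divide_iff zero_less_numeral zero_less_power)
    have "norm (Y m - Y n) < e" if "N \<le> m" "N \<le> n" for m n
    proof -
      have "2 / Suc m \<le> 2 / Suc N" "2 / Suc n \<le> 2 / Suc N"
        using that by (simp_all add: frac_le)
      then have "(norm (Y m - Y n))\<^sup>2 < e\<^sup>2"
        using Y_diff[of m n] N by simp
      then show ?thesis using \<open>0 < e\<close> by (simp add: power_less_imp_less_base)
    qed
    then show "\<exists>M. \<forall>m\<ge>M. \<forall>n\<ge>M. norm (Y m - Y n) < e" by blast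
  qed
qed

lemma infdist_attains_inf_convex:
  fixes x :: "'a::{real_inner,complete_space}"
  assumes S: "convex S" "closed S" "S \<noteq> {}"
  obtains p where "p \<in> S" "infdist x S = dist x p"
proof -
  define d where "d = infdist x S"
  have d_nonneg: "0 \<le> d" using infdist_nonneg by (simp add: d_def)
  have "\<exists>y\<in>S. (dist x y)\<^sup>2 < d\<^sup>2 + 1 / Suc n" for n
  proof -
    have "infdist x S < sqrt (d\<^sup>2 + 1 / Suc n)"
      using d_nonneg by (simp add: d_def real_less_rsqrt)
    then obtain y where "y \<in> S" "dist x y < sqrt (d\<^sup>2 + 1 / Suc n)"
      using S(3) by (auto simp: infdist_notempty cINF_less_iff intro: bdd_belowI[of _ 0])
    then show ?thesis
      by (metis real_sqrt_less_iff zero_le_dist abs_of_nonneg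
            real_sqrt_pow2_iff zero_le_power2 real_sqrt_abs power2_eq_square)
  qed
  then obtain Y where Y_in: "\<And>n. Y n \<in> S" and Y_close: "\<And>n. (dist x (Y n))\<^sup>2 < d\<^sup>2 + 1 / Suc n"
    by metis
  then have "Cauchy Y"
    unfolding d_def by (rule minimising_sequence_convex_Cauchy[OF S(1)])
  then obtain p where Y_lim: "Y \<longlonglongrightarrow> p"
    using Cauchy_convergent_iff convergent_def by blast
  have "p \<in> S" using closed_sequentially[OF S(2)] Y_in Y_lim by blast
  have "(\<lambda>n. (dist x (Y n))\<^sup>2) \<longlonglongrightarrow> (dist x p)\<^sup>2" by (intro tendsto_intros Y_lim)
  moreover have "(\<lambda>n. d\<^sup>2 + 1 / Suc n) \<longlonglongrightarrow> d\<^sup>2 + 0"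
    by (intro tendsto_intros LIMSEQ_Suc[OF lim_inverse_n'])
  moreover have "\<exists>N. \<forall>n\<ge>N. (dist x (Y n))\<^sup>2 \<le> d\<^sup>2 + 1 / Suc n"
    using Y_close less_imp_le by blast
  ultimately have "(dist x p)\<^sup>2 \<le> d\<^sup>2 + 0"
    by (rule LIMSEQ_le)
  then have "dist x p \<le> d"
    using power2_le_imp_le[of "dist x p" d] d_nonneg by simp
  with infdist_le[OF \<open>p \<in> S\<close>, of x] have "infdist x S = dist x p"
    unfolding d_def by linarith
  with \<open>p \<in> S\<close> show thesis by (rule that)
qed

lemma nearest_point_subspace_orthogonal:
  fixes x :: "'a::real_inner"
  assumes S: "subspace S" "p \<in> S" and nearest: "\<And>y. y \<in> S \<Longrightarrow> dist x p \<le> dist x y"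
    and "s \<in> S"
  shows "orthogonal (x - p) s"
proof (cases "s = 0")
  case False
  define c where "c = inner (x - p) s"
  define t where "t = c / (norm s)\<^sup>2"
  have "p + t *\<^sub>R s \<in> S" using S \<open>s \<in> S\<close> by (simp add: subspace_add subspace_scale)
  then have "(norm (x - p))\<^sup>2 \<le> (norm ((x - p) - t *\<^sub>R s))\<^sup>2"
    using nearest by (simp add: dist_norm power_mono diff_diff_eq)
  also have "\<dots> = (norm (x - p))\<^sup>2 - 2 * t * c + t\<^sup>2 * (norm s)\<^sup>2"
    unfolding power2_norm_eq_inner c_def by (simp add: inner_commute algebra_simps power2_eq_square)
  also have "\<dots> = (norm (x - p))\<^sup>2 - c\<^sup>2 / (norm s)\<^sup>2"
    using False by (simp add: t_def power2_eq_square field_simps)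
  finally have "c\<^sup>2 / (norm s)\<^sup>2 \<le> 0" by simp
  then have "c = 0" using False by (simp add: divide_le_0_iff)
  then show ?thesis by (simp add: orthogonal_def c_def)
qed (simp add: orthogonal_clauses)

lemma cmod_cinner_le:
  assumes "cplx_structure J"
  shows "cmod (cinner J x y) \<le> norm x * norm y"
proof -
  have JJ: "\<And>x. J (J x) = - x" and J_inner: "\<And>x y. inner (J x) (J y) = inner x y"
    using assms unfolding cplx_structure_def by auto
  have "inner y (J y) = - inner (J y) y"
    using J_inner[of y "J y"] by (simp add: JJ)
  then have y_Jy: "inner y (J y) = 0" by (simp add: inner_commute)
  define c1 c2 where "c1 = inner x y" and "c2 = inner x (J y)"
  define v where "v = c1 *\<^sub>R y + c2 *\<^sub>R J y"
  \<comment> \<open>y and J y are orthogonal and of equal length, so v is (norm y)^2 times the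
    orthogonal projection of x onto their real span.\<close>
  define C where "C = c1\<^sup>2 + c2\<^sup>2"
  have "inner x v = C"
    unfolding v_def C_def c1_def c2_def by (simp add: inner_add_right power2_eq_square)
  moreover have "(norm v)\<^sup>2 = C * (norm y)\<^sup>2"
    unfolding power2_norm_eq_inner v_def C_def
    by (simp add: J_inner y_Jy inner_commute[of "J y" y] power2_eq_square algebra_simps)
  then have "norm v = sqrt C * norm y"
    by (metis abs_norm_cancel real_sqrt_abs real_sqrt_mult)
  ultimately have "C \<le> norm x * (sqrt C * norm y)"
    using norm_cauchy_schwarz[of x v] by simp
  then have "sqrt C * sqrt C \<le> sqrt C * (norm x * norm y)"
    by (simp add: C_def algebra_simps)
  moreover have "0 \<le> C" by (simp add: C_def)
  ultimately have "sqrt C \<le> norm x * norm y"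
    using mult_le_cancel_left_pos[of "sqrt C" "sqrt C" "norm x * norm y"]
    by (cases "C = 0") auto
  then show ?thesis unfolding cinner_def C_def c1_def c2_def by (simp add: complex_norm)
qed

lemma Re_cinner [simp]: "Re (cinner J x y) = inner x y"
  by (simp add: cinner_def)

lemma orthogonal_if_cinner_eq_0: "cinner J x y = 0 \<Longrightarrow> orthogonal x y"
  by (simp add: orthogonal_def cinner_def Complex_eq_0)

definition orthogonal_projection :: "'a::real_inner set \<Rightarrow> 'a \<Rightarrow> 'a" where
  "orthogonal_projection W x = (SOME p. p \<in> W \<and> (\<forall>y\<in>W. orthogonal (x - p) y))"

locale closed_hilbert_subspace =
  fixes W :: "'a::{real_inner,complete_space} set"
  assumes subspace_W: "subspace W" and closed_W: "closed W"
begin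

abbreviation P :: "'a \<Rightarrow> 'a" where "P \<equiv> orthogonal_projection W"

lemma orthogonal_projection_exists: "\<exists>p\<in>W. \<forall>y\<in>W. orthogonal (x - p) y"
proof -
  have "W \<noteq> {}" using subspace_0[OF subspace_W] by blast
  then obtain p where p: "p \<in> W" "infdist x W = dist x p"
    by (rule infdist_attains_inf_convex[OF subspace_imp_convex[OF subspace_W] closed_W])
  then have "dist x p \<le> dist x y" if "y \<in> W" for y
    using infdist_le[OF that, of x] p(2) by simp
  then show ?thesis
    using nearest_point_subspace_orthogonal[OF subspace_W p(1)] p(1) by blast
qed

lemma orthogonal_projection_in: "P x \<in> W"
  and orthogonal_projection_orthogonal: "y \<in> W \<Longrightarrow> orthogonal (x - P x) y"
  using someI_ex[OF orthogonal_projection_exists[of x, unfolded Bex_def]]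
  unfolding orthogonal_projection_def by auto

lemma orthogonal_projection_unique:
  assumes "p \<in> W" "\<And>y. y \<in> W \<Longrightarrow> orthogonal (x - p) y"
  shows "P x = p"
proof -
  have "P x - p \<in> W" using assms(1) orthogonal_projection_in subspace_W by (simp add: subspace_diff)
  then have "inner (x - p) (P x - p) = 0" "inner (x - P x) (P x - p) = 0"
    using assms(2) orthogonal_projection_orthogonal unfolding orthogonal_def by blast+
  then have "inner (P x - p) (P x - p) = 0" by (simp add: inner_diff_left)
  then show ?thesis by simp
qed

lemma orthogonal_projection_fixed: "y \<in> W \<Longrightarrow> P y = y"
  by (rule orthogonal_projection_unique) (auto simp: orthogonal_clauses)

lemma orthogonal_projection_diff: "P (x - y) = P x - P y"
proof (rule orthogonal_projection_unique)
  show "P x - P y \<in> W" using orthogonal_projection_in subspace_W by (simp add: subspace_diff)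
  fix z assume "z \<in> W"
  then show "orthogonal (x - y - (P x - P y)) z"
    using orthogonal_projection_orthogonal[of z x] orthogonal_projection_orthogonal[of z y]
    by (simp add: orthogonal_def algebra_simps)
qed

lemma orthogonal_projection_scaleR: "P (c *\<^sub>R x) = c *\<^sub>R P x"
proof (rule orthogonal_projection_unique)
  show "c *\<^sub>R P x \<in> W" using orthogonal_projection_in subspace_W by (simp add: subspace_scale)
  fix z assume "z \<in> W"
  then show "orthogonal (c *\<^sub>R x - c *\<^sub>R P x) z"
    using orthogonal_projection_orthogonal[of z x]
    by (simp add: orthogonal_def flip: scaleR_diff_right)
qed

lemma inner_orthogonal_projection_self: "inner x (P x) = (norm (P x))\<^sup>2"
  using orthogonal_projection_orthogonal[OF orthogonal_projection_in, of x]
  by (simp add: orthogonal_def inner_diff_left power2_norm_eq_inner)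

lemma norm_orthogonal_projection_pythagoras: "(norm x)\<^sup>2 = (norm (x - P x))\<^sup>2 + (norm (P x))\<^sup>2"
  using inner_orthogonal_projection_self[of x]
  unfolding power2_norm_eq_inner by (simp add: inner_diff_left inner_diff_right inner_commute)

lemma norm_orthogonal_projection_le: "norm (P x) \<le> norm x"
  and norm_diff_orthogonal_projection_le: "norm (x - P x) \<le> norm x"
  using norm_orthogonal_projection_pythagoras[of x]
    power2_le_imp_le[of "norm (P x)" "norm x"] power2_le_imp_le[of "norm (x - P x)" "norm x"]
  by simp_all

lemma orthogonal_projection_diff_self: "P (P x - x) = 0"
  by (simp add: orthogonal_projection_diff orthogonal_projection_fixed orthogonal_projection_in)

lemma norm_unit_orthogonal_projection_diff_scaleR:
  assumes "norm a = 1"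
  shows "norm (P a - (norm (P a))\<^sup>2 *\<^sub>R a) = norm (P a) * norm (P a - a)"
proof -
  define c where "c = norm (P a)"
  have "inner a (P a) = c\<^sup>2" "inner (P a) (P a) = c\<^sup>2" "inner a a = 1"
    using inner_orthogonal_projection_self[of a] assms
    by (simp_all add: c_def flip: power2_norm_eq_inner)
  then have "(norm (P a - c\<^sup>2 *\<^sub>R a))\<^sup>2 = (c * norm (P a - a))\<^sup>2"
    unfolding power2_norm_eq_inner power_mult_distrib
    by (simp add: inner_commute power2_eq_square algebra_simps)
  then show ?thesis
    by (simp add: c_def power2_eq_imp_eq)
qed

lemma cinner_orthogonal_projection:
  assumes "J ` W \<subseteq> W" "y \<in> W"
  shows "cinner J x y = cinner J (P x) y"
proof -
  have "inner (x - P x) y = 0" "inner (x - P x) (J y) = 0"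
    using assms orthogonal_projection_orthogonal unfolding orthogonal_def by blast+
  then show ?thesis unfolding cinner_def by (simp add: inner_diff_left)
qed

lemma Sup_cinner_ratio_eq:
  assumes J: "cplx_structure J" "J ` W \<subseteq> W" and "a \<noteq> 0"
  shows "Sup (insert 0 ((\<lambda>y. cmod (cinner J a y) / (norm a * norm y)) ` (W - {0})))
           = norm (P a) / norm a"
proof (rule cSup_eq_maximum)
  have "cmod (cinner J a (P a)) = norm (P a) * norm (P a)"
  proof (rule antisym)
    show "cmod (cinner J a (P a)) \<le> norm (P a) * norm (P a)"
      using cinner_orthogonal_projection[OF J(2) orthogonal_projection_in] cmod_cinner_le[OF J(1)]
      by metis
    show "norm (P a) * norm (P a) \<le> cmod (cinner J a (P a))"
      using abs_Re_le_cmod[of "cinner J a (P a)"] inner_orthogonal_projection_self[of a]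
      by (simp add: power2_eq_square)
  qed
  then show "norm (P a) / norm a
      \<in> insert 0 ((\<lambda>y. cmod (cinner J a y) / (norm a * norm y)) ` (W - {0}))"
    using orthogonal_projection_in[of a] by (cases "P a = 0") (auto intro!: image_eqI[of _ _ "P a"])
  fix r assume "r \<in> insert 0 ((\<lambda>y. cmod (cinner J a y) / (norm a * norm y)) ` (W - {0}))"
  then consider "r = 0" | y where "y \<in> W" "r = cmod (cinner J a y) / (norm a * norm y)"
    by blast
  then show "r \<le> norm (P a) / norm a"
  proof cases
    case 2
    then have "cmod (cinner J a y) \<le> norm (P a) * norm y"
      using cinner_orthogonal_projection[OF J(2)] cmod_cinner_le[OF J(1)] by metis
    then have "r \<le> norm (P a) * norm y / (norm a * norm y)"
      unfolding 2(2) by (rule divide_right_mono) simp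
    also have "\<dots> \<le> norm (P a) / norm a" by (cases "y = 0") auto
    finally show ?thesis .
  qed simp
qed

end

section \<open>Minimal residual approximation\<close>

definition proj_infsup :: "'a::real_inner set \<Rightarrow> 'a set \<Rightarrow> real" where
  "proj_infsup W Ud = (INF a\<in>Ud - {0}. norm (orthogonal_projection W a) / norm a)"

locale minimal_residual = closed_hilbert_subspace W
  for W :: "'a::{real_inner,complete_space} set" +
  fixes Ud :: "'a set" and Q :: "'a \<Rightarrow> 'a"
  assumes subspace_Ud: "subspace Ud" and closed_Ud: "closed Ud" and nontrivial_Ud: "Ud \<noteq> {0}"
    and proj_infsup_pos: "proj_infsup W Ud > 0"
    and Q_in: "Q u \<in> Ud"
    and Q_orthogonal: "x \<in> Ud \<Longrightarrow> orthogonal (P (u - Q u)) x"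
begin

abbreviation \<gamma> :: real where "\<gamma> \<equiv> proj_infsup W Ud"

definition quasi_optimality_ratio :: "'a \<Rightarrow> real" where
  "quasi_optimality_ratio u = norm (u - Q u) / infdist u Ud"

lemma proj_infsup_le: "a \<in> Ud \<Longrightarrow> \<gamma> * norm a \<le> norm (P a)"
proof (cases "a = 0")
  case False
  assume "a \<in> Ud"
  then have "\<gamma> \<le> norm (P a) / norm a"
    unfolding proj_infsup_def using False by (intro cINF_lower bdd_belowI[of _ 0]) auto
  then show ?thesis using False by (simp add: pos_le_divide_eq)
qed simp

lemma proj_infsup_approx:
  assumes "\<gamma> < g"
  obtains a where "a \<in> Ud" "norm a = 1" "norm (P a) < g"
proof -
  have "Ud - {0} \<noteq> {}" using nontrivial_Ud subspace_0[OF subspace_Ud] by blast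
  moreover have "bdd_below ((\<lambda>a. norm (P a) / norm a) ` (Ud - {0}))"
    by (rule bdd_belowI[of _ 0]) auto
  ultimately obtain b where b: "b \<in> Ud" "b \<noteq> 0" "norm (P b) / norm b < g"
    using assms unfolding proj_infsup_def by (auto simp: cINF_less_iff)
  define a where "a = (1 / norm b) *\<^sub>R b"
  have "a \<in> Ud" using b(1) subspace_Ud by (simp add: a_def subspace_scale)
  moreover have "norm a = 1" using b(2) by (simp add: a_def)
  moreover have "norm (P a) < g"
    using b(3) by (simp add: a_def orthogonal_projection_scaleR divide_inverse mult.commute)
  ultimately show thesis by (rule that)
qed

lemma proj_infsup_le_1: "\<gamma> \<le> 1"
proof -
  obtain a where "a \<in> Ud" "a \<noteq> 0" using nontrivial_Ud subspace_0[OF subspace_Ud] by blast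
  then have "\<gamma> * norm a \<le> 1 * norm a"
    using proj_infsup_le norm_orthogonal_projection_le order_trans by fastforce
  with \<open>a \<noteq> 0\<close> show ?thesis by simp
qed

lemma eq_0_if_orthogonal_projection_eq_0: "a \<in> Ud \<Longrightarrow> P a = 0 \<Longrightarrow> a = 0"
  using proj_infsup_le[of a] proj_infsup_pos by (auto simp: mult_le_0_iff)

lemma Q_unique:
  assumes "q \<in> Ud" "\<And>x. x \<in> Ud \<Longrightarrow> orthogonal (P (u - q)) x"
  shows "Q u = q"
proof -
  define d where "d = Q u - q"
  have "d \<in> Ud" using Q_in assms(1) subspace_Ud by (simp add: d_def subspace_diff)
  have "P d = P (u - q) - P (u - Q u)"
    by (simp add: d_def flip: orthogonal_projection_diff)
  then have "inner d (P d) = 0"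
    using assms(2)[OF \<open>d \<in> Ud\<close>] Q_orthogonal[OF \<open>d \<in> Ud\<close>]
    by (simp add: orthogonal_def inner_diff_right inner_commute)
  then have "P d = 0" by (simp add: inner_orthogonal_projection_self)
  with \<open>d \<in> Ud\<close> have "d = 0" by (rule eq_0_if_orthogonal_projection_eq_0)
  then show ?thesis by (simp add: d_def)
qed

lemma norm_diff_orthogonal_projection_le_proj_infsup:
  assumes "a \<in> Ud"
  shows "norm (a - P a) \<le> sqrt (1 - \<gamma>\<^sup>2) * norm a"
proof -
  have "0 \<le> 1 - \<gamma>\<^sup>2" using proj_infsup_pos proj_infsup_le_1 by (simp add: abs_square_le_1)
  have "(\<gamma> * norm a)\<^sup>2 \<le> (norm (P a))\<^sup>2"
    using proj_infsup_le[OF assms] proj_infsup_pos by (simp add: power_mono)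
  then have "(norm (a - P a))\<^sup>2 \<le> (sqrt (1 - \<gamma>\<^sup>2) * norm a)\<^sup>2"
    using norm_orthogonal_projection_pythagoras[of a] \<open>0 \<le> 1 - \<gamma>\<^sup>2\<close>
    by (simp add: algebra_simps)
  then show ?thesis
    using power2_le_imp_le[of "norm (a - P a)"] \<open>0 \<le> 1 - \<gamma>\<^sup>2\<close> by simp
qed

lemma proj_infsup_mult_error_le:
  assumes "t \<in> Ud"
  shows "\<gamma> * norm (u - Q u) \<le> norm (u - t)"
proof -
  define a b where "a = Q u - t" and "b = u - Q u"
  define s where "s = sqrt (1 - \<gamma>\<^sup>2)"
  have "a \<in> Ud" using Q_in assms subspace_Ud by (simp add: a_def subspace_diff)
  \<comment> \<open>The W-components of a and b are orthogonal, because P b is orthogonal to Ud.\<close>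
  have "inner a b = inner (a - P a) (b - P b)"
    using Q_orthogonal[OF \<open>a \<in> Ud\<close>, of u]
      orthogonal_projection_orthogonal[OF orthogonal_projection_in, of b a]
      orthogonal_projection_orthogonal[OF orthogonal_projection_in, of a b]
    by (simp add: b_def orthogonal_def inner_diff_left inner_diff_right inner_commute)
  then have "\<bar>inner a b\<bar> \<le> norm (a - P a) * norm (b - P b)"
    by (simp add: Cauchy_Schwarz_ineq2)
  also have "\<dots> \<le> norm (a - P a) * norm b"
    by (simp add: mult_left_mono norm_diff_orthogonal_projection_le)
  also have "\<dots> \<le> s * norm a * norm b"
    using norm_diff_orthogonal_projection_le_proj_infsup[OF \<open>a \<in> Ud\<close>]
    by (simp add: s_def mult_right_mono)
  finally have ab: "- (s * norm a * norm b) \<le> inner a b" by linarith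
  have "(\<gamma> * norm b)\<^sup>2 \<le> (norm a - s * norm b)\<^sup>2 + (1 - s\<^sup>2) * (norm b)\<^sup>2"
    using proj_infsup_le_1 proj_infsup_pos by (simp add: s_def power_mult_distrib abs_square_le_1)
  also have "\<dots> = (norm a)\<^sup>2 + (norm b)\<^sup>2 - 2 * s * norm a * norm b"
    by (simp add: power2_eq_square algebra_simps)
  also have "\<dots> \<le> (norm a)\<^sup>2 + (norm b)\<^sup>2 + 2 * inner a b"
    using ab by simp
  also have "\<dots> = (norm (u - t))\<^sup>2"
    unfolding a_def b_def power2_norm_eq_inner by (simp add: inner_commute algebra_simps)
  finally show ?thesis
    using power2_le_imp_le[of "\<gamma> * norm (u - Q u)" "norm (u - t)"] by (simp add: b_def)
qed

lemma quasi_optimality_ratio_le: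
  assumes "u \<notin> Ud"
  shows "quasi_optimality_ratio u \<le> 1 / \<gamma>"
proof -
  have "Ud \<noteq> {}" using subspace_0[OF subspace_Ud] by blast
  then have "\<gamma> * norm (u - Q u) \<le> infdist u Ud"
    by (simp add: infdist_notempty dist_norm proj_infsup_mult_error_le cINF_greatest)
  with infdist_pos_not_in_closed[OF closed_Ud \<open>Ud \<noteq> {}\<close> assms] proj_infsup_pos show ?thesis
    by (simp add: quasi_optimality_ratio_def field_simps)
qed

lemma quasi_optimality_ratio_ge_1:
  assumes "u \<notin> Ud"
  shows "1 \<le> quasi_optimality_ratio u"
proof -
  have "Ud \<noteq> {}" using subspace_0[OF subspace_Ud] by blast
  moreover have "infdist u Ud \<le> norm (u - Q u)"
    using infdist_le[OF Q_in] by (simp add: dist_norm)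
  ultimately show ?thesis
    using infdist_pos_not_in_closed[OF closed_Ud _ assms]
    by (simp add: quasi_optimality_ratio_def le_divide_eq_1)
qed

lemma Q_orthogonal_projection_diff_scaleR:
  assumes "a \<in> Ud"
  shows "Q (P a - r *\<^sub>R a) = (1 - r) *\<^sub>R a"
proof (rule Q_unique)
  show "(1 - r) *\<^sub>R a \<in> Ud" using assms subspace_Ud by (simp add: subspace_scale)
  show "orthogonal (P (P a - r *\<^sub>R a - (1 - r) *\<^sub>R a)) x" for x
    using orthogonal_projection_diff_self[of a] by (simp add: algebra_simps orthogonal_clauses)
qed

lemma orthogonal_projection_diff_scaleR_notin:
  assumes "a \<in> Ud" "P a \<noteq> a"
  shows "P a - r *\<^sub>R a \<notin> Ud"
proof
  assume "P a - r *\<^sub>R a \<in> Ud"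
  then have "P a - r *\<^sub>R a - (1 - r) *\<^sub>R a \<in> Ud"
    using assms(1) subspace_Ud by (simp add: subspace_diff subspace_scale)
  then have "P a - a = 0"
    using eq_0_if_orthogonal_projection_eq_0[of "P a - a"] orthogonal_projection_diff_self[of a]
    by (simp add: algebra_simps)
  with assms(2) show False by simp
qed

text \<open>The ratio 1/\<gamma> is approached at z = P a - c^2 a, where a \<in> Ud is a unit
  vector with c = norm (P a) close to \<gamma>: then Q z = (1 - c^2) a, and z - Q z = P a - a
  is longer than z by the factor 1/c.\<close>
lemma quasi_optimality_ratio_gt:
  assumes "\<gamma> < g" "g \<le> 1"
  obtains z where "z \<notin> Ud" "1 / g < quasi_optimality_ratio z"
proof -
  obtain a where a: "a \<in> Ud" "norm a = 1" "norm (P a) < g"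
    using proj_infsup_approx[OF assms(1)] .
  define c where "c = norm (P a)"
  have "\<gamma> \<le> c" using proj_infsup_le[OF a(1)] a(2) by (simp add: c_def)
  then have c: "0 < c" "c < g" "c < 1"
    using proj_infsup_pos a(3) assms(2) by (auto simp: c_def)
  define z where "z = P a - c\<^sup>2 *\<^sub>R a"
  have "P a \<noteq> a" using c(3) a(2) by (auto simp: c_def)
  with a(1) have "z \<notin> Ud" unfolding z_def by (rule orthogonal_projection_diff_scaleR_notin)
  then have "0 < infdist z Ud"
    using infdist_pos_not_in_closed[OF closed_Ud] subspace_0[OF subspace_Ud] by blast
  have "z - Q z = P a - a"
    using Q_orthogonal_projection_diff_scaleR[OF a(1)] by (simp add: z_def algebra_simps)
  moreover have "norm z = c * norm (P a - a)"
    unfolding z_def c_def by (rule norm_unit_orthogonal_projection_diff_scaleR[OF a(2)])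
  moreover have "infdist z Ud \<le> norm z"
    using infdist_le[OF subspace_0[OF subspace_Ud], of z] by simp
  ultimately have "infdist z Ud \<le> c * norm (z - Q z)" by simp
  with \<open>0 < infdist z Ud\<close> c(1) have "1 / c \<le> quasi_optimality_ratio z"
    by (simp add: quasi_optimality_ratio_def field_simps)
  moreover have "1 / g < 1 / c" using c by (simp add: frac_less2)
  ultimately show thesis using \<open>z \<notin> Ud\<close> that by simp
qed

theorem SUP_quasi_optimality_ratio:
  assumes "Ud \<noteq> UNIV"
  shows "(SUP u\<in>UNIV - Ud. quasi_optimality_ratio u) = 1 / \<gamma>"
proof (rule cSup_eq_non_empty)
  show "quasi_optimality_ratio ` (UNIV - Ud) \<noteq> {}" using assms by auto
  show "r \<le> 1 / \<gamma>" if "r \<in> quasi_optimality_ratio ` (UNIV - Ud)" for r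
    using that quasi_optimality_ratio_le by auto
  fix y assume upper: "\<And>r. r \<in> quasi_optimality_ratio ` (UNIV - Ud) \<Longrightarrow> r \<le> y"
  obtain u where "u \<notin> Ud" using assms by auto
  then have "1 \<le> y" using upper[of "quasi_optimality_ratio u"] quasi_optimality_ratio_ge_1 by force
  show "1 / \<gamma> \<le> y"
  proof (rule ccontr)
    assume "\<not> 1 / \<gamma> \<le> y"
    then have "\<gamma> < 1 / y" "1 / y \<le> 1"
      using \<open>1 \<le> y\<close> proj_infsup_pos by (auto simp: field_simps)
    then obtain z where "z \<notin> Ud" "y < quasi_optimality_ratio z"
      by (rule quasi_optimality_ratio_gt) simp
    with upper show False by force
  qed
qed

end

section \<open>The ultra-weak formulation\<close>

lemma csubspace_linear_image:
  assumes "linear f" "csubspace J S" "\<And>v. f (J v) = J' (f v)"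
  shows "csubspace J' (f ` S)"
  using assms linear_subspace_image unfolding csubspace_def by (auto simp flip: assms(3))

lemma closed_hilbert_subspace_bij_image:
  fixes f :: "'b::real_normed_vector \<Rightarrow> 'a::{real_inner,complete_space}"
  assumes f: "bij f" "linear f" "bounded_linear (inv f)" and S: "subspace S" "closed S"
  shows "closed_hilbert_subspace (f ` S)"
proof
  show "subspace (f ` S)" using f(2) S(1) by (rule linear_subspace_image)
  have "f ` S = inv f -` S"
    using bij_vimage_eq_inv_image[OF bij_imp_bij_inv[OF f(1)]] by (simp add: inv_inv_eq[OF f(1)])
  then show "closed (f ` S)"
    using continuous_closed_vimage[OF S(2) linear_continuous_at[OF f(3)]] by simp
qed

lemma (in closed_hilbert_subspace) infsup_const_eq_proj_infsup:
  assumes J: "cplx_structure J" "J ` W \<subseteq> W" and B': "W = B' ` Vd" "inj B'" "linear B'"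
  shows "infsup_const J B' Ud Vd = proj_infsup W Ud"
  unfolding infsup_const_def proj_infsup_def
proof (rule INF_cong[OF refl])
  fix a assume "a \<in> Ud - {0}"
  have "W - {0} = B' ` (Vd - {0})" using B' by (simp add: image_set_diff linear_0)
  then have "(\<lambda>v. cmod (cinner J a (B' v)) / (norm a * norm (B' v))) ` (Vd - {0})
      = (\<lambda>y. cmod (cinner J a y) / (norm a * norm y)) ` (W - {0})"
    by (simp add: image_image)
  with Sup_cinner_ratio_eq[OF J] \<open>a \<in> Ud - {0}\<close> show
    "Sup (insert 0 ((\<lambda>v. cmod (cinner J a (B' v)) / (norm a * norm (B' v))) ` (Vd - {0})))
      = norm (P a) / norm a"
    by simp
qed

lemma (in closed_hilbert_subspace) orthogonal_projection_saddle_point: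
  assumes "W = B' ` Vd" "v \<in> Vd"
    and "\<forall>v'\<in>Vd. cinner J (B' v) (B' v') + cinner J q (B' v') = cinner J u (B' v')"
  shows "P (u - q) = B' v"
proof (rule orthogonal_projection_unique)
  show "B' v \<in> W" using assms(1,2) by simp
  fix y assume "y \<in> W"
  then obtain v' where "v' \<in> Vd" "y = B' v'" using assms(1) by auto
  then show "orthogonal (u - q - B' v) y"
    using arg_cong[where f=Re, OF assms(3)[rule_format, OF \<open>v' \<in> Vd\<close>]]
    by (simp add: orthogonal_def inner_diff_left)
qed

theorem theorem4p1:
  fixes JU :: "'u::{real_inner, complete_space} \<Rightarrow> 'u"
    and JV :: "'v::banach \<Rightarrow> 'v"
    and B' :: "'v \<Rightarrow> 'u"
    and Ud :: "'u set" and Vd :: "'v set"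
    and sol :: "'u \<Rightarrow> 'v \<times> 'u"
  assumes JU: "cplx_structure JU"
    and JV: "linear JV" "\<forall>v. JV (JV v) = - v"
    and B'_bdd: "bounded_linear B'" and B'_bij: "bij B'" and B'_inv_bdd: "bounded_linear (inv B')"
    and B'_clin: "\<forall>v. B' (JV v) = JU (B' v)"
    and Ud: "csubspace JU Ud" "closed Ud" "Ud \<noteq> {0}" "Ud \<noteq> UNIV"
    and Vd: "csubspace JV Vd" "closed Vd"
    and gamma_pos: "infsup_const JU B' Ud Vd > 0"
    and sol: "\<forall>u. fst (sol u) \<in> Vd \<and> snd (sol u) \<in> Ud
               \<and> (\<forall>v\<in>Vd. cinner JU (B' (fst (sol u))) (B' v) + cinner JU (snd (sol u)) (B' v)
                          = cinner JU u (B' v))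
               \<and> (\<forall>w\<in>Ud. cinner JU (B' (fst (sol u))) w = 0)"
  shows "(SUP u \<in> UNIV - Ud. norm (u - snd (sol u)) / infdist u Ud)
           = 1 / infsup_const JU B' Ud Vd"
proof -
  define W where "W = B' ` Vd"
  have "linear B'" using B'_bdd by (rule bounded_linear.linear)
  have W: "csubspace JU W"
    unfolding W_def using \<open>linear B'\<close> Vd(1) B'_clin by (intro csubspace_linear_image) auto
  interpret closed_hilbert_subspace W
    unfolding W_def using B'_bij \<open>linear B'\<close> B'_inv_bdd _ Vd(2)
    by (rule closed_hilbert_subspace_bij_image) (use Vd(1) in \<open>simp add: csubspace_def\<close>)
  have infsup: "infsup_const JU B' Ud Vd = proj_infsup W Ud"
    using JU W W_def bij_is_inj[OF B'_bij] \<open>linear B'\<close>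
    by (intro infsup_const_eq_proj_infsup) (auto simp: csubspace_def)
  have residual: "P (u - snd (sol u)) = B' (fst (sol u))" for u
    using W_def sol by (intro orthogonal_projection_saddle_point) auto
  interpret minimal_residual W Ud "\<lambda>u. snd (sol u)"
  proof unfold_locales
    show "subspace Ud" using Ud(1) by (simp add: csubspace_def)
    show "closed Ud" "Ud \<noteq> {0}" by (fact Ud(2), fact Ud(3))
    show "0 < proj_infsup W Ud" using gamma_pos by (simp add: infsup)
    show "snd (sol u) \<in> Ud" for u using sol by simp
    show "orthogonal (P (u - snd (sol u))) x" if "x \<in> Ud" for u x
      using sol that by (auto simp: residual intro: orthogonal_if_cinner_eq_0)
  qed
  show ?thesis
    using SUP_quasi_optimality_ratio[OF Ud(4)] by (simp add: quasi_optimality_ratio_def infsup)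
qed

end
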